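(* Assume the standing hypotheses in the context. For every $(\tau,\xi)\in\mathbb{R}\times\mathbb{R}^n$, the system $$Z'(t)=A(t)Z(t)+f(t,Y(t,\tau,\xi)+Z(t))$$ has a unique solution $g(t,(\tau,\xi))$ that is bounded on $\mathbb{R}$, and $\|g(t,(\tau,\xi))\|\le 2K\beta\alpha^{-1}$ for all $t\in\mathbb{R}$.
   Context: Standing hypotheses: $A:\mathbb{R}\to\mathbb{R}^{n\times n}$ is continuous and bounded, $T(t,s)$ is the evolution operator of $x'=A(t)x$. $\mu:\mathbb{R}\to(0,\infty)$ is an increasing differentiable growth rate: $\mu(0)=1$, $\lim_{t\to-\infty}\mu(t)=0$, $\lim_{t\to+\infty}\mu(t)=+\infty$. The system $x'=A(t)x$ admits an algebraic dichotomy: projections $P(s)$, $Q(s)=I-P(s)$, constants $K,\alpha>0$ with $T(t,s)P(s)=P(t)T(t,s)$, $\|T(t,s)P(s)\|\le K(\mu(t)/\mu(s))^{-\alpha}$ ($t\ge s$), $\|T(t,s)Q(s)\|\le K(\mu(s)/\mu(t))^{-\alpha}$ ($t\le s$). $f:\mathbb{R}\times\mathbb{R}^n\to\mathbb{R}^n$ is continuous, $\|f(t,x)\|\le\beta\mu'(t)\mu^{-1}(t)$, $\|f(t,x_1)-f(t,x_2)\|\le\gamma\mu'(t)\mu^{-1}(t)\|x_1-x_2\|$ for constants $\beta,\gamma\ge0$, and $6K\gamma\alpha^{-1}<1$. $Y(t,\tau,\xi)$ denotes the solution of $x'=A(t)x$ with $Y(\tau)=\xi$. *)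

theory Defs
  imports "HOL-Analysis.Analysis"
begin

definition opnorm :: "real^'n^'n \<Rightarrow> real" where
  "opnorm M = onorm (\<lambda>x. M *v x)"

end

theory Submission
  imports Defs
begin

(* The bounded solution is the fixed point of the Lyapunov-Perron operator
     z |-> integral_{s <= t} T(t,s) P(s) F(s, z s) ds - integral_{s >= t} T(t,s) Q(s) F(s, z s) ds,
   with F(t, x) = f(t, Y(t,tau,xi) + x), acting on bounded continuous functions.  Against the
   dichotomy bounds the rate mu'/mu integrates exactly: (mu t / mu s)^(-alpha) mu'(s)/mu(s) over
   s <= t and (mu s / mu t)^(-alpha) mu'(s)/mu(s) over s >= t both have integral 1/alpha.  Hence the
   operator maps into the ball of radius 2 K beta / alpha and is a contraction with constant
   2 K gamma / alpha < 1.  Its fixed points are exactly the bounded solutions, because a bounded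
   solution x of x' = A(t) x vanishes: |P(t) x(t)| <= K (mu s / mu t)^alpha sup |x| for all s <= t,
   and the Q-part is controlled in the same way as s -> +inf. *)

lemma bounded_bilinear_matrix_vector_mult:
  "bounded_bilinear (\<lambda>(M::real^'n^'m) (x::real^'n). M *v x)"
proof
  fix M M' :: "real^'n^'m" and x x' :: "real^'n" and r :: real
  show "(M + M') *v x = M *v x + M' *v x" by (rule matrix_vector_mult_add_rdistrib)
  show "M *v (x + x') = M *v x + M *v x'" by (rule matrix_vector_right_distrib)
  show "(r *\<^sub>R M) *v x = r *\<^sub>R (M *v x)" by (rule scaleR_matrix_vector_assoc[symmetric])
  show "M *v (r *\<^sub>R x) = r *\<^sub>R (M *v x)" by (rule matrix_vector_mult_scaleR)
next
  have "norm (M *v x) \<le> norm M * norm x * (real CARD('m) * real CARD('n))"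
    for M :: "real^'n^'m" and x :: "real^'n"
  proof -
    have "onorm ((*v) M) \<le> real CARD('m) * real CARD('n) * norm M"
    proof (rule onorm_le_matrix_component)
      fix i j
      have "\<bar>M $ i $ j\<bar> \<le> norm (M $ i)" by (rule component_le_norm_cart)
      also have "\<dots> \<le> norm M" by (rule Finite_Cartesian_Product.norm_nth_le)
      finally show "\<bar>M $ i $ j\<bar> \<le> norm M" .
    qed
    moreover have "norm (M *v x) \<le> onorm ((*v) M) * norm x"
      by (rule onorm) simp
    ultimately show ?thesis
      using mult_right_mono[of _ _ "norm x"] by (fastforce simp: mult_ac)
  qed
  then show "\<exists>K. \<forall>M x. norm ((M::real^'n^'m) *v x) \<le> norm M * norm x * K"
    by blast
qed

lemma norm_matrix_vector_mult_le_opnorm: "norm (M *v x) \<le> opnorm M * norm x"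
  unfolding opnorm_def by (rule onorm[OF matrix_vector_mul_bounded_linear])

lemma mono_imp_deriv_nonneg:
  fixes g :: "real \<Rightarrow> real"
  assumes "mono g" and "(g has_real_derivative D) (at x)"
  shows "D \<ge> 0"
proof (rule ccontr)
  assume "\<not> D \<ge> 0"
  then obtain d where "d > 0" and "\<And>h. 0 < h \<Longrightarrow> h < d \<Longrightarrow> g (x + h) < g x"
    using DERIV_neg_dec_right[OF assms(2)] by force
  then have "g (x + d/2) < g x" by simp
  moreover have "g x \<le> g (x + d/2)" using assms(1) \<open>d > 0\<close> by (simp add: monoD)
  ultimately show False by simp
qed

lemma norm_le_exp_of_derivative_bound:
  fixes x :: "real \<Rightarrow> 'a::real_inner"
  assumes deriv: "\<And>u. (x has_vector_derivative x' u) (at u)"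
    and bound: "\<And>u. norm (x' u) \<le> M * norm (x u)"
    and "s \<le> t"
  shows "norm (x t) \<le> exp (M * (t - s)) * norm (x s)"
proof -
  define \<phi> where "\<phi> u = exp (- 2 * M * u) * (x u \<bullet> x u)" for u
  have "\<phi> t \<le> \<phi> s"
  proof (rule DERIV_nonpos_imp_nonincreasing[OF \<open>s \<le> t\<close>])
    fix u
    have "((\<lambda>u. x u \<bullet> x u) has_real_derivative 2 * (x u \<bullet> x' u)) (at u)"
      using bounded_bilinear.has_vector_derivative[OF bounded_bilinear_inner deriv deriv]
      by (simp add: has_real_derivative_iff_has_vector_derivative inner_commute)
    then have "(\<phi> has_real_derivative
        exp (- 2 * M * u) * (2 * (x u \<bullet> x' u) - 2 * M * (x u \<bullet> x u))) (at u)"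
      unfolding \<phi>_def by (auto intro!: derivative_eq_intros simp: algebra_simps)
    moreover have "x u \<bullet> x' u \<le> M * (x u \<bullet> x u)"
    proof -
      have "x u \<bullet> x' u \<le> norm (x u) * norm (x' u)" by (rule norm_cauchy_schwarz)
      also have "\<dots> \<le> norm (x u) * (M * norm (x u))" by (intro mult_left_mono bound) simp
      finally show ?thesis by (simp add: dot_square_norm power2_eq_square mult_ac)
    qed
    then have "exp (- 2 * M * u) * (2 * (x u \<bullet> x' u) - 2 * M * (x u \<bullet> x u)) \<le> 0"
      by (intro mult_nonneg_nonpos) simp_all
    ultimately show "\<exists>y. (\<phi> has_real_derivative y) (at u) \<and> y \<le> 0"
      by blast
  qed
  then have "exp (2 * M * t) * \<phi> t \<le> exp (2 * M * t) * \<phi> s" by simp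
  then have "(norm (x t))\<^sup>2 \<le> (exp (M * (t - s)) * norm (x s))\<^sup>2"
    by (simp add: \<phi>_def dot_square_norm power_mult_distrib mult.assoc[symmetric]
        exp_add[symmetric] flip: exp_of_nat_mult) (simp add: algebra_simps)
  then show ?thesis
    by (rule power2_le_imp_le) simp
qed

lemma norm_le_exp_abs_of_derivative_bound:
  fixes x :: "real \<Rightarrow> 'a::real_inner"
  assumes deriv: "\<And>u. (x has_vector_derivative x' u) (at u)"
    and bound: "\<And>u. norm (x' u) \<le> M * norm (x u)"
  shows "norm (x t) \<le> exp (M * \<bar>t - s\<bar>) * norm (x s)"
proof (cases "s \<le> t")
  case True
  then show ?thesis
    using norm_le_exp_of_derivative_bound[OF deriv bound] by simp
next
  case False
  have "((\<lambda>u. x (- u)) has_vector_derivative - x' (- u)) (at u)" for u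
    using vector_diff_chain_at[OF has_vector_derivative_minus[OF has_vector_derivative_id]
        deriv[of "- u"]] by (simp add: o_def)
  from norm_le_exp_of_derivative_bound[OF this, of M "- s" "- t"] False bound
  show ?thesis by simp
qed

lemma has_integral_atLeast_of_deriv:
  fixes w W :: "real \<Rightarrow> real"
  assumes deriv: "\<And>x. (W has_real_derivative w x) (at x)"
    and nonneg: "\<And>x. x \<ge> a \<Longrightarrow> w x \<ge> 0"
    and lim: "(W \<longlongrightarrow> L) at_top"
  shows "(w has_integral (L - W a)) {a..}"
proof (rule has_integral_to_inf)
  have ftc: "(w has_integral (W y - W a)) {a..y}" if "a \<le> y" for y
    using that deriv
    by (intro fundamental_theorem_of_calculus)
      (auto intro: has_field_derivative_at_within simp flip: has_real_derivative_iff_has_vector_derivative)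
  then show "w integrable_on {a..y}" for y
    by (cases "a \<le> y") auto
  have "\<forall>\<^sub>F y in at_top. W y - W a = integral {a..y} w"
    using eventually_ge_at_top[of a] by eventually_elim (metis ftc integral_unique)
  then show "((\<lambda>y. integral {a..y} w) \<longlongrightarrow> L - W a) at_top"
    by (rule Lim_transform_eventually[rotated]) (intro tendsto_intros lim)
qed (use nonneg in auto)

lemma has_integral_atMost_of_deriv:
  fixes w W :: "real \<Rightarrow> real"
  assumes deriv: "\<And>x. (W has_real_derivative w x) (at x)"
    and nonneg: "\<And>x. x \<le> a \<Longrightarrow> w x \<ge> 0"
    and lim: "(W \<longlongrightarrow> L) at_bot"
  shows "(w has_integral (W a - L)) {..a}"
proof -
  have "((\<lambda>x. w (- x)) has_integral (- L - (- W (- (- a))))) {- a..}"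
  proof (rule has_integral_atLeast_of_deriv)
    show "((\<lambda>x. - W (- x)) has_real_derivative w (- x)) (at x)" for x
      using DERIV_minus[OF DERIV_chain2[OF deriv DERIV_minus[OF DERIV_ident]]] by simp
    show "((\<lambda>x. - W (- x)) \<longlongrightarrow> - L) at_top"
      by (intro tendsto_minus filterlim_compose[OF lim filterlim_uminus_at_bot_at_top])
  qed (use nonneg in auto)
  then have "(\<lambda>x. w (- x)) absolutely_integrable_on {- a..}
      \<and> integral {- a..} (\<lambda>x. w (- x)) = W a - L"
    using nonneg by (auto intro!: nonnegative_absolutely_integrable_1 simp: integral_unique)
  then have "w absolutely_integrable_on {..a} \<and> integral {..a} w = W a - L"
    by (subst (asm) has_absolute_integral_reflect_real) auto
  then show ?thesis
    by (metis absolutely_integrable_on_def has_integral_integral)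
qed

lemma integral_atMost_split:
  fixes k :: "real \<Rightarrow> 'a::banach"
  assumes "continuous_on UNIV k" "k integrable_on {..a}" "a \<le> u"
  shows "integral {..u} k = integral {..a} k + integral {a..u} k"
proof -
  have "(k has_integral (integral {..a} k + integral {a..u} k)) ({..a} \<union> {a..u})"
  proof (rule has_integral_Un)
    show "negligible ({..a} \<inter> {a..u})"
      by (rule negligible_subset[OF negligible_sing[of a]]) auto
    show "(k has_integral integral {a..u} k) {a..u}"
      by (rule integrable_integral, rule integrable_continuous_interval,
          rule continuous_on_subset[OF assms(1)]) simp
  qed (use assms in \<open>simp add: integrable_integral\<close>)
  moreover have "{..a} \<union> {a..u} = {..u}" using \<open>a \<le> u\<close> by auto
  ultimately show ?thesis by (simp add: integral_unique)
qed

lemma integral_atLeast_split: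
  fixes k :: "real \<Rightarrow> 'a::banach"
  assumes "continuous_on UNIV k" "k integrable_on {u..}" "a \<le> u"
  shows "integral {a..} k = integral {a..u} k + integral {u..} k"
proof -
  have "(k has_integral (integral {a..u} k + integral {u..} k)) ({a..u} \<union> {u..})"
  proof (rule has_integral_Un)
    show "negligible ({a..u} \<inter> {u..})"
      by (rule negligible_subset[OF negligible_sing[of u]]) auto
    show "(k has_integral integral {a..u} k) {a..u}"
      by (rule integrable_integral, rule integrable_continuous_interval,
          rule continuous_on_subset[OF assms(1)]) simp
  qed (use assms in \<open>simp add: integrable_integral\<close>)
  moreover have "{a..u} \<union> {u..} = {a..}" using \<open>a \<le> u\<close> by auto
  ultimately show ?thesis by (simp add: integral_unique)
qed

lemma integral_has_vector_derivative_at: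
  fixes k :: "real \<Rightarrow> 'a::banach"
  assumes "continuous_on UNIV k" "a < t"
  shows "((\<lambda>u. integral {a..u} k) has_vector_derivative k t) (at t)"
proof -
  have "((\<lambda>u. integral {a..u} k) has_vector_derivative k t) (at t within {a..t + 1})"
    using assms by (intro integral_has_vector_derivative continuous_on_subset[OF assms(1)]) auto
  moreover have "at t within {a..t + 1} = at t"
    using assms by (intro at_within_Icc_at) auto
  ultimately show ?thesis by simp
qed

lemma integral_atMost_has_vector_derivative:
  fixes k :: "real \<Rightarrow> 'a::banach"
  assumes cont: "continuous_on UNIV k" and int: "\<And>u. k integrable_on {..u}"
  shows "((\<lambda>u. integral {..u} k) has_vector_derivative k t) (at t)"
proof -
  have "((\<lambda>u. integral {..t - 1} k + integral {t - 1..u} k) has_vector_derivative k t) (at t)"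
    using has_vector_derivative_add[OF has_vector_derivative_const
        integral_has_vector_derivative_at[OF cont]] by fastforce
  then show ?thesis
  proof (rule has_vector_derivative_transform_within_open[of _ _ _ "{t - 1<..}"])
    show "integral {..t - 1} k + integral {t - 1..y} k = integral {..y} k" if "y \<in> {t - 1<..}" for y
      using integral_atMost_split[OF cont int, of "t - 1" y] that by simp
  qed auto
qed

lemma integral_atLeast_has_vector_derivative:
  fixes k :: "real \<Rightarrow> 'a::banach"
  assumes cont: "continuous_on UNIV k" and int: "\<And>u. k integrable_on {u..}"
  shows "((\<lambda>u. integral {u..} k) has_vector_derivative - k t) (at t)"
proof -
  have "((\<lambda>u. integral {t - 1..} k - integral {t - 1..u} k) has_vector_derivative 0 - k t) (at t)"
    by (intro has_vector_derivative_diff has_vector_derivative_const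
        integral_has_vector_derivative_at[OF cont]) simp
  then have "((\<lambda>u. integral {t - 1..} k - integral {t - 1..u} k) has_vector_derivative - k t) (at t)"
    by simp
  then show ?thesis
  proof (rule has_vector_derivative_transform_within_open[of _ _ _ "{t - 1<..}"])
    show "integral {t - 1..} k - integral {t - 1..y} k = integral {y..} k" if "y \<in> {t - 1<..}" for y
      using integral_atLeast_split[OF cont int, of "t - 1" y] that by simp
  qed auto
qed

lemma continuous_on_shift_second:
  fixes f :: "real \<Rightarrow> 'a::real_normed_vector \<Rightarrow> 'b::topological_space"
  assumes "continuous_on UNIV (\<lambda>(t, x). f t x)" "continuous_on UNIV y"
  shows "continuous_on UNIV (\<lambda>(t, x). f t (y t + x))"
proof -
  have "continuous_on UNIV (\<lambda>p. (fst p, y (fst p) + snd p))"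
    by (intro continuous_intros continuous_on_compose2[OF assms(2)]) auto
  then show ?thesis
    using continuous_on_compose2[OF assms(1)] by (fastforce simp: case_prod_beta)
qed

lemma continuous_bounded_by_integrable_imp_integrable:
  fixes f :: "'a::euclidean_space \<Rightarrow> 'b::euclidean_space"
  assumes "continuous_on UNIV f" "g integrable_on S" "\<And>x. x \<in> S \<Longrightarrow> norm (f x) \<le> g x"
    and "S \<in> sets lebesgue"
  shows "f integrable_on S"
proof (rule measurable_bounded_by_integrable_imp_integrable[OF _ assms(2,3,4)])
  show "f \<in> borel_measurable (lebesgue_on S)"
    by (rule continuous_imp_measurable_on_sets_lebesgue[OF continuous_on_subset[OF assms(1)] assms(4)])
      simp
qed

locale evolution_operator =
  fixes A :: "real \<Rightarrow> real^'n^'n"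
    and T :: "real \<Rightarrow> real \<Rightarrow> real^'n^'n"
  assumes A_bounded: "bounded (range A)"
    and T_self: "\<And>s. T s s = mat 1"
    and T_has_derivative: "\<And>t s. ((\<lambda>t. T t s) has_vector_derivative (A t ** T t s)) (at t)"
begin

definition hom_solution :: "(real \<Rightarrow> real^'n) \<Rightarrow> bool" where
  "hom_solution x \<longleftrightarrow> (\<forall>t. (x has_vector_derivative A t *v x t) (at t))"

lemma hom_solution_T: "hom_solution (\<lambda>t. T t s *v v)"
  unfolding hom_solution_def
  using bounded_linear.has_vector_derivative[OF
      bounded_bilinear.bounded_linear_left[OF bounded_bilinear_matrix_vector_mult] T_has_derivative]
  by (simp add: matrix_vector_mul_assoc)

lemma hom_solution_diff: "hom_solution x \<Longrightarrow> hom_solution y \<Longrightarrow> hom_solution (\<lambda>t. x t - y t)"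
  unfolding hom_solution_def
  by (auto intro!: has_vector_derivative_diff simp: matrix_vector_mult_diff_distrib)

lemma A_apply_bound:
  obtains M where "\<And>t x. norm (A t *v x) \<le> M * norm x"
proof -
  obtain B where B: "\<And>t. norm (A t) \<le> B"
    using A_bounded by (auto simp: bounded_iff)
  obtain C where C: "\<And>M x. norm ((M::real^'n^'n) *v x) \<le> norm M * norm x * C" "C > 0"
    using bounded_bilinear.pos_bounded[OF bounded_bilinear_matrix_vector_mult] by blast
  have "norm (A t *v x) \<le> (B * C) * norm x" for t x
  proof -
    have "norm (A t *v x) \<le> norm (A t) * norm x * C" by (rule C(1))
    also have "\<dots> \<le> B * norm x * C" using B C(2) by (intro mult_right_mono) auto
    finally show ?thesis by (simp add: mult_ac)
  qed
  then show ?thesis by (rule that)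
qed

lemma hom_solution_growth:
  obtains M where "\<And>x t s. hom_solution x \<Longrightarrow> norm (x t) \<le> exp (M * \<bar>t - s\<bar>) * norm (x s)"
proof -
  obtain M where "\<And>t x. norm (A t *v x) \<le> M * norm x"
    by (rule A_apply_bound) blast
  then show ?thesis
    by (intro that norm_le_exp_abs_of_derivative_bound) (auto simp: hom_solution_def)
qed

lemma hom_solution_eq_T: "hom_solution x \<Longrightarrow> x t = T t s *v x s"
proof -
  assume "hom_solution x"
  then have "hom_solution (\<lambda>t. x t - T t s *v x s)"
    by (intro hom_solution_diff hom_solution_T)
  moreover obtain M where "\<And>x t s. hom_solution x \<Longrightarrow> norm (x t) \<le> exp (M * \<bar>t - s\<bar>) * norm (x s)"
    by (rule hom_solution_growth) blast
  ultimately have "norm (x t - T t s *v x s) \<le> exp (M * \<bar>t - s\<bar>) * norm (x s - T s s *v x s)"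
    by blast
  then show "x t = T t s *v x s" by (simp add: T_self)
qed

lemma T_cocycle: "T t s *v (T s r *v v) = T t r *v v"
  using hom_solution_eq_T[OF hom_solution_T, of t r v s] by simp

lemma continuous_on_T_first: "continuous_on UNIV (\<lambda>t. T t s *v v)"
  using hom_solution_T[of s v] unfolding hom_solution_def
  by (intro continuous_at_imp_continuous_on ballI has_vector_derivative_continuous) blast

lemma continuous_on_T_second:
  assumes "continuous_on UNIV F"
  shows "continuous_on UNIV (\<lambda>s. T t s *v F s)"
proof (intro continuous_at_imp_continuous_on ballI)
  fix s\<^sub>0 :: real
  obtain M where M: "\<And>x t s. hom_solution x \<Longrightarrow> norm (x t) \<le> exp (M * \<bar>t - s\<bar>) * norm (x s)"
    by (rule hom_solution_growth) blast
  define g where "g s = exp (M * \<bar>t - s\<bar>) * norm (F s - T s s\<^sub>0 *v F s\<^sub>0)" for s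
  \<comment> \<open>No derivative in \<open>s\<close> is assumed: the cocycle identity and the growth estimate
    bound \<open>T t s\<close> locally in \<open>s\<close>.\<close>
  have "((\<lambda>s. T t s *v F s - T t s\<^sub>0 *v F s\<^sub>0) \<longlongrightarrow> 0) (at s\<^sub>0)"
  proof (rule Lim_null_comparison)
    show "\<forall>\<^sub>F s in at s\<^sub>0. norm (T t s *v F s - T t s\<^sub>0 *v F s\<^sub>0) \<le> g s"
    proof (intro always_eventually allI)
      fix s
      have "T t s *v F s - T t s\<^sub>0 *v F s\<^sub>0 = T t s *v (F s - T s s\<^sub>0 *v F s\<^sub>0)"
        by (simp add: matrix_vector_mult_diff_distrib T_cocycle)
      then show "norm (T t s *v F s - T t s\<^sub>0 *v F s\<^sub>0) \<le> g s"
        using M[OF hom_solution_T, of t s "F s - T s s\<^sub>0 *v F s\<^sub>0" s] by (simp add: g_def T_self)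
    qed
    have "isCont g s\<^sub>0"
      unfolding g_def
      using assms continuous_on_T_first[of s\<^sub>0 "F s\<^sub>0"]
      by (intro continuous_intros) (auto simp: continuous_on_eq_continuous_at)
    then show "(g \<longlongrightarrow> 0) (at s\<^sub>0)"
      by (simp add: isCont_def g_def T_self)
  qed
  then show "isCont (\<lambda>s. T t s *v F s) s\<^sub>0"
    unfolding isCont_def by (rule LIM_zero_cancel)
qed

end

locale algebraic_dichotomy = evolution_operator A T
  for A :: "real \<Rightarrow> real^'n^'n" and T +
  fixes P :: "real \<Rightarrow> real^'n^'n"
    and mu mu' :: "real \<Rightarrow> real"
    and K \<alpha> :: real
  assumes mu_pos: "\<And>t. mu t > 0"
    and mu_mono: "mono mu"
    and mu_deriv: "\<And>t. (mu has_real_derivative mu' t) (at t)"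
    and mu_bot: "(mu \<longlongrightarrow> 0) at_bot"
    and mu_top: "filterlim mu at_top at_top"
    and alpha_pos: "\<alpha> > 0"
    and P_comm: "\<And>t s. T t s ** P s = P t ** T t s"
    and dich_P: "\<And>t s. t \<ge> s \<Longrightarrow> opnorm (T t s ** P s) \<le> K * (mu t / mu s) powr (-\<alpha>)"
    and dich_Q: "\<And>t s. t \<le> s \<Longrightarrow> opnorm (T t s ** (mat 1 - P s)) \<le> K * (mu s / mu t) powr (-\<alpha>)"
begin

lemma K_nonneg: "K \<ge> 0"
proof -
  have "0 \<le> opnorm (T 0 0 ** P 0)"
    unfolding opnorm_def by (rule onorm_pos_le[OF matrix_vector_mul_bounded_linear])
  also have "\<dots> \<le> K * (mu 0 / mu 0) powr (-\<alpha>)"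
    by (rule dich_P) simp
  finally show ?thesis
    using mu_pos[of 0] by simp
qed

lemma mu'_nonneg: "mu' t \<ge> 0"
  by (rule mono_imp_deriv_nonneg[OF mu_mono mu_deriv])

lemma T_P_apply: "T t s *v (P s *v v) = P t *v (T t s *v v)"
  by (simp add: matrix_vector_mul_assoc P_comm)

lemma T_Q_apply: "T t s *v ((mat 1 - P s) *v v) = (mat 1 - P t) *v (T t s *v v)"
  by (simp add: matrix_vector_mult_diff_rdistrib matrix_vector_mult_diff_distrib T_P_apply)

lemma tendsto_mu_powr_at_bot: "((\<lambda>s. mu s powr \<alpha>) \<longlongrightarrow> 0) at_bot"
  using mu_pos alpha_pos
  by (intro tendsto_zero_powrI[OF mu_bot tendsto_const]) (auto intro: always_eventually less_imp_le)

lemma tendsto_mu_powr_neg_at_top: "((\<lambda>s. mu s powr (-\<alpha>)) \<longlongrightarrow> 0) at_top"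
proof -
  have "((\<lambda>s. inverse (mu s) powr \<alpha>) \<longlongrightarrow> 0) at_top"
    using mu_pos alpha_pos
    by (intro tendsto_zero_powrI[OF tendsto_inverse_0_at_top[OF mu_top] tendsto_const])
      (auto intro: always_eventually less_imp_le)
  then show ?thesis by (simp add: inverse_powr powr_minus)
qed

definition weight_past :: "real \<Rightarrow> real" where
  "weight_past s = mu s powr (\<alpha> - 1) * mu' s"

definition weight_future :: "real \<Rightarrow> real" where
  "weight_future s = mu s powr (- \<alpha> - 1) * mu' s"

lemma dich_P_weight: "(mu t / mu s) powr (-\<alpha>) * (mu' s / mu s) = mu t powr (-\<alpha>) * weight_past s"
  using mu_pos[of s] mu_pos[of t] unfolding weight_past_def
  by (simp add: powr_divide powr_minus powr_diff field_simps)

lemma dich_Q_weight: "(mu s / mu t) powr (-\<alpha>) * (mu' s / mu s) = mu t powr \<alpha> * weight_future s"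
  using mu_pos[of s] mu_pos[of t] unfolding weight_future_def
  by (simp add: powr_divide powr_minus powr_diff powr_add field_simps)

lemma mu_powr_has_real_derivative:
  "((\<lambda>s. mu s powr a) has_real_derivative a * mu s powr (a - 1) * mu' s) (at s)"
  by (rule DERIV_chain2[OF has_real_derivative_powr[OF mu_pos] mu_deriv])

lemma has_integral_weight_past: "(weight_past has_integral mu t powr \<alpha> / \<alpha>) {..t}"
proof -
  have "(weight_past has_integral mu t powr \<alpha> / \<alpha> - 0) {..t}"
  proof (rule has_integral_atMost_of_deriv)
    show "((\<lambda>s. mu s powr \<alpha> / \<alpha>) has_real_derivative weight_past s) (at s)" for s
      using DERIV_cdivide[OF mu_powr_has_real_derivative[of \<alpha>], of \<alpha>] alpha_pos
      by (simp add: weight_past_def)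
    show "((\<lambda>s. mu s powr \<alpha> / \<alpha>) \<longlongrightarrow> 0) at_bot"
      using tendsto_divide_zero[OF tendsto_mu_powr_at_bot] by simp
  qed (use mu'_nonneg in \<open>simp add: weight_past_def\<close>)
  then show ?thesis by simp
qed

lemma has_integral_weight_future: "(weight_future has_integral mu t powr (-\<alpha>) / \<alpha>) {t..}"
proof -
  have "(weight_future has_integral (0 - (- (mu t powr (-\<alpha>)) / \<alpha>))) {t..}"
  proof (rule has_integral_atLeast_of_deriv)
    show "((\<lambda>s. - (mu s powr (-\<alpha>)) / \<alpha>) has_real_derivative weight_future s) (at s)" for s
      using DERIV_cdivide[OF DERIV_minus[OF mu_powr_has_real_derivative[of "-\<alpha>"]], of \<alpha>] alpha_pos
      by (simp add: weight_future_def)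
    show "((\<lambda>s. - (mu s powr (-\<alpha>)) / \<alpha>) \<longlongrightarrow> 0) at_top"
      using tendsto_divide_zero[OF tendsto_minus[OF tendsto_mu_powr_neg_at_top, simplified]] by simp
  qed (use mu'_nonneg in \<open>simp add: weight_future_def\<close>)
  moreover have "0 - (- (mu t powr (-\<alpha>)) / \<alpha>) = mu t powr (-\<alpha>) / \<alpha>"
    by simp
  ultimately show ?thesis
    by metis
qed

definition rate_bounded :: "real \<Rightarrow> (real \<Rightarrow> real^'n) \<Rightarrow> bool" where
  "rate_bounded c G \<longleftrightarrow> continuous_on UNIV G \<and> (\<forall>s. norm (G s) \<le> c * mu' s / mu s)"

text \<open>The integrands of the Green operator are transported to time \<open>0\<close>, so that \<open>t\<close> enters
  only through the outer factor \<open>T t 0\<close> and the limits of integration.\<close>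

definition green_past :: "(real \<Rightarrow> real^'n) \<Rightarrow> real \<Rightarrow> real^'n" where
  "green_past G s = P 0 *v (T 0 s *v G s)"

definition green_future :: "(real \<Rightarrow> real^'n) \<Rightarrow> real \<Rightarrow> real^'n" where
  "green_future G s = (mat 1 - P 0) *v (T 0 s *v G s)"

definition green :: "(real \<Rightarrow> real^'n) \<Rightarrow> real \<Rightarrow> real^'n" where
  "green G t = T t 0 *v (integral {..t} (green_past G) - integral {t..} (green_future G))"

lemma continuous_on_green_past: "continuous_on UNIV G \<Longrightarrow> continuous_on UNIV (green_past G)"
  unfolding green_past_def
  by (rule bounded_linear.continuous_on[OF matrix_vector_mul_bounded_linear continuous_on_T_second])

lemma continuous_on_green_future: "continuous_on UNIV G \<Longrightarrow> continuous_on UNIV (green_future G)"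
  unfolding green_future_def
  by (rule bounded_linear.continuous_on[OF matrix_vector_mul_bounded_linear continuous_on_T_second])

lemma T_green_past: "T t 0 *v green_past G s = (T t s ** P s) *v G s"
  unfolding green_past_def
  by (simp add: T_P_apply[symmetric] T_cocycle matrix_vector_mul_assoc[symmetric])

lemma T_green_future: "T t 0 *v green_future G s = (T t s ** (mat 1 - P s)) *v G s"
  unfolding green_future_def
  by (simp add: T_Q_apply[symmetric] T_cocycle matrix_vector_mul_assoc[symmetric])

lemma norm_T_green_past_le:
  assumes "rate_bounded c G" "s \<le> t"
  shows "norm (T t 0 *v green_past G s) \<le> K * c * mu t powr (-\<alpha>) * weight_past s"
proof -
  have "norm (T t 0 *v green_past G s) \<le> opnorm (T t s ** P s) * norm (G s)"
    unfolding T_green_past by (rule norm_matrix_vector_mult_le_opnorm)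
  also have "\<dots> \<le> K * (mu t / mu s) powr (-\<alpha>) * (c * mu' s / mu s)"
    using assms K_nonneg unfolding rate_bounded_def by (intro mult_mono dich_P) auto
  also have "\<dots> = K * c * ((mu t / mu s) powr (-\<alpha>) * (mu' s / mu s))"
    by simp
  also have "\<dots> = K * c * mu t powr (-\<alpha>) * weight_past s"
    by (simp only: dich_P_weight mult.assoc)
  finally show ?thesis .
qed

lemma norm_T_green_future_le:
  assumes "rate_bounded c G" "t \<le> s"
  shows "norm (T t 0 *v green_future G s) \<le> K * c * mu t powr \<alpha> * weight_future s"
proof -
  have "norm (T t 0 *v green_future G s) \<le> opnorm (T t s ** (mat 1 - P s)) * norm (G s)"
    unfolding T_green_future by (rule norm_matrix_vector_mult_le_opnorm)
  also have "\<dots> \<le> K * (mu s / mu t) powr (-\<alpha>) * (c * mu' s / mu s)"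
    using assms K_nonneg unfolding rate_bounded_def by (intro mult_mono dich_Q) auto
  also have "\<dots> = K * c * ((mu s / mu t) powr (-\<alpha>) * (mu' s / mu s))"
    by simp
  also have "\<dots> = K * c * mu t powr \<alpha> * weight_future s"
    by (simp only: dich_Q_weight mult.assoc)
  finally show ?thesis .
qed

lemma integrable_T_green_past:
  assumes "rate_bounded c G"
  shows "(\<lambda>s. T t 0 *v green_past G s) integrable_on {..t}"
proof (rule continuous_bounded_by_integrable_imp_integrable)
  show "continuous_on UNIV (\<lambda>s. T t 0 *v green_past G s)"
    using assms unfolding rate_bounded_def
    by (intro bounded_linear.continuous_on[OF matrix_vector_mul_bounded_linear] continuous_on_green_past) auto
  show "(\<lambda>s. K * c * mu t powr (-\<alpha>) * weight_past s) integrable_on {..t}"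
    using has_integral_mult_right[OF has_integral_weight_past] by blast
qed (use norm_T_green_past_le[OF assms] in auto)

lemma integrable_T_green_future:
  assumes "rate_bounded c G"
  shows "(\<lambda>s. T t 0 *v green_future G s) integrable_on {t..}"
proof (rule continuous_bounded_by_integrable_imp_integrable)
  show "continuous_on UNIV (\<lambda>s. T t 0 *v green_future G s)"
    using assms unfolding rate_bounded_def
    by (intro bounded_linear.continuous_on[OF matrix_vector_mul_bounded_linear] continuous_on_green_future) auto
  show "(\<lambda>s. K * c * mu t powr \<alpha> * weight_future s) integrable_on {t..}"
    using has_integral_mult_right[OF has_integral_weight_future] by blast
qed (use norm_T_green_future_le[OF assms] in auto)

lemma norm_integral_T_green_past_le:
  assumes "rate_bounded c G"
  shows "norm (integral {..t} (\<lambda>s. T t 0 *v green_past G s)) \<le> K * c / \<alpha>"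
proof -
  have "norm (integral {..t} (\<lambda>s. T t 0 *v green_past G s))
      \<le> integral {..t} (\<lambda>s. K * c * mu t powr (-\<alpha>) * weight_past s)"
    using has_integral_mult_right[OF has_integral_weight_past] norm_T_green_past_le[OF assms]
    by (intro integral_norm_bound_integral integrable_T_green_past[OF assms]) auto
  also have "\<dots> = K * c * mu t powr (-\<alpha>) * (mu t powr \<alpha> / \<alpha>)"
    by (rule integral_unique[OF has_integral_mult_right[OF has_integral_weight_past]])
  also have "\<dots> = K * c / \<alpha>"
    using mu_pos[of t] by (simp add: powr_minus field_simps)
  finally show ?thesis .
qed

lemma norm_integral_T_green_future_le:
  assumes "rate_bounded c G"
  shows "norm (integral {t..} (\<lambda>s. T t 0 *v green_future G s)) \<le> K * c / \<alpha>"
proof -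
  have "norm (integral {t..} (\<lambda>s. T t 0 *v green_future G s))
      \<le> integral {t..} (\<lambda>s. K * c * mu t powr \<alpha> * weight_future s)"
    using has_integral_mult_right[OF has_integral_weight_future] norm_T_green_future_le[OF assms]
    by (intro integral_norm_bound_integral integrable_T_green_future[OF assms]) auto
  also have "\<dots> = K * c * mu t powr \<alpha> * (mu t powr (-\<alpha>) / \<alpha>)"
    by (rule integral_unique[OF has_integral_mult_right[OF has_integral_weight_future]])
  also have "\<dots> = K * c / \<alpha>"
    using mu_pos[of t] by (simp add: powr_minus field_simps)
  finally show ?thesis .
qed

lemma integrable_green_past:
  assumes "rate_bounded c G"
  shows "green_past G integrable_on {..t}"
proof -
  have "((\<lambda>y. T 0 t *v y) \<circ> (\<lambda>s. T t 0 *v green_past G s)) integrable_on {..t}"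
    by (rule integrable_linear[OF integrable_T_green_past[OF assms] matrix_vector_mul_bounded_linear])
  then show ?thesis
    by (simp add: o_def T_cocycle T_self)
qed

lemma integrable_green_future:
  assumes "rate_bounded c G"
  shows "green_future G integrable_on {t..}"
proof -
  have "((\<lambda>y. T 0 t *v y) \<circ> (\<lambda>s. T t 0 *v green_future G s)) integrable_on {t..}"
    by (rule integrable_linear[OF integrable_T_green_future[OF assms] matrix_vector_mul_bounded_linear])
  then show ?thesis
    by (simp add: o_def T_cocycle T_self)
qed

lemma green_eq_integrals:
  assumes "rate_bounded c G"
  shows "green G t = integral {..t} (\<lambda>s. T t 0 *v green_past G s)
                   - integral {t..} (\<lambda>s. T t 0 *v green_future G s)"
  using integral_linear[OF integrable_green_past[OF assms] matrix_vector_mul_bounded_linear, of t "T t 0"]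
    integral_linear[OF integrable_green_future[OF assms] matrix_vector_mul_bounded_linear, of t "T t 0"]
  by (simp add: green_def o_def matrix_vector_mult_diff_distrib)

lemma norm_green_le:
  assumes "rate_bounded c G"
  shows "norm (green G t) \<le> 2 * K * c / \<alpha>"
proof -
  have "norm (green G t) \<le> norm (integral {..t} (\<lambda>s. T t 0 *v green_past G s))
      + norm (integral {t..} (\<lambda>s. T t 0 *v green_future G s))"
    unfolding green_eq_integrals[OF assms] by (rule norm_triangle_ineq4)
  also have "\<dots> \<le> K * c / \<alpha> + K * c / \<alpha>"
    by (intro add_mono norm_integral_T_green_past_le norm_integral_T_green_future_le assms)
  finally show ?thesis
    by simp
qed

lemma green_has_derivative:
  assumes "rate_bounded c G"
  shows "(green G has_vector_derivative A t *v green G t + G t) (at t)"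
proof -
  let ?I = "\<lambda>u. integral {..u} (green_past G) - integral {u..} (green_future G)"
  have cont: "continuous_on UNIV G"
    using assms unfolding rate_bounded_def by blast
  have "(?I has_vector_derivative green_past G t - - green_future G t) (at t)"
    using integrable_green_past[OF assms] integrable_green_future[OF assms]
    by (intro has_vector_derivative_diff integral_atMost_has_vector_derivative
        integral_atLeast_has_vector_derivative continuous_on_green_past continuous_on_green_future cont)
  also have "green_past G t - - green_future G t = T 0 t *v G t"
    unfolding green_past_def green_future_def by (simp add: matrix_vector_mult_diff_rdistrib)
  finally have "((\<lambda>u. T u 0 *v ?I u) has_vector_derivative
      T t 0 *v (T 0 t *v G t) + (A t ** T t 0) *v ?I t) (at t)"
    by (rule bounded_bilinear.has_vector_derivative[OF bounded_bilinear_matrix_vector_mult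
          T_has_derivative, simplified])
  then show ?thesis
    unfolding green_def[abs_def]
    by (simp add: T_cocycle T_self matrix_vector_mul_assoc[symmetric] add.commute)
qed

lemma green_diff:
  assumes "rate_bounded c G" "rate_bounded d H"
  shows "green G t - green H t = green (\<lambda>s. G s - H s) t"
proof -
  have "green_past (\<lambda>s. G s - H s) = (\<lambda>s. green_past G s - green_past H s)"
    "green_future (\<lambda>s. G s - H s) = (\<lambda>s. green_future G s - green_future H s)"
    unfolding green_past_def green_future_def by (simp_all add: matrix_vector_mult_diff_distrib)
  then show ?thesis
    using integrable_green_past[OF assms(1)] integrable_green_future[OF assms(1)]
      integrable_green_past[OF assms(2)] integrable_green_future[OF assms(2)]
    by (simp add: green_def integral_diff matrix_vector_mult_diff_distrib algebra_simps)
qed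

lemma bounded_hom_solution_eq_0:
  assumes x: "hom_solution x" and "bounded (range x)"
  shows "x t = 0"
proof -
  obtain B where B: "\<And>s. norm (x s) \<le> B"
    using \<open>bounded (range x)\<close> by (auto simp: bounded_iff)
  have "norm (P t *v x t) \<le> 0"
  proof (rule tendsto_lowerbound)
    show "((\<lambda>s. K * mu t powr (-\<alpha>) * mu s powr \<alpha> * B) \<longlongrightarrow> 0) at_bot"
      by (intro tendsto_mult_right_zero tendsto_mult_left_zero tendsto_mu_powr_at_bot)
    show "\<forall>\<^sub>F s in at_bot. norm (P t *v x t) \<le> K * mu t powr (-\<alpha>) * mu s powr \<alpha> * B"
    proof (rule eventually_mono[OF eventually_le_at_bot[of t]])
      fix s assume "s \<le> t"
      have "P t *v x t = (T t s ** P s) *v x s"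
        using hom_solution_eq_T[OF x, of t s] by (simp add: T_P_apply matrix_vector_mul_assoc[symmetric])
      then have "norm (P t *v x t) \<le> opnorm (T t s ** P s) * norm (x s)"
        by (simp add: norm_matrix_vector_mult_le_opnorm)
      also have "\<dots> \<le> K * (mu t / mu s) powr (-\<alpha>) * B"
        using \<open>s \<le> t\<close> K_nonneg by (intro mult_mono dich_P B) auto
      also have "(mu t / mu s) powr (-\<alpha>) = mu t powr (-\<alpha>) * mu s powr \<alpha>"
        using mu_pos[of s] mu_pos[of t] by (simp add: powr_divide powr_minus field_simps)
      finally show "norm (P t *v x t) \<le> K * mu t powr (-\<alpha>) * mu s powr \<alpha> * B"
        by (simp add: mult_ac)
    qed
  qed simp
  moreover have "norm ((mat 1 - P t) *v x t) \<le> 0"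
  proof (rule tendsto_lowerbound)
    show "((\<lambda>s. K * mu t powr \<alpha> * mu s powr (-\<alpha>) * B) \<longlongrightarrow> 0) at_top"
      by (intro tendsto_mult_right_zero tendsto_mult_left_zero tendsto_mu_powr_neg_at_top)
    show "\<forall>\<^sub>F s in at_top. norm ((mat 1 - P t) *v x t) \<le> K * mu t powr \<alpha> * mu s powr (-\<alpha>) * B"
    proof (rule eventually_mono[OF eventually_ge_at_top[of t]])
      fix s assume "t \<le> s"
      have "(mat 1 - P t) *v x t = (T t s ** (mat 1 - P s)) *v x s"
        using hom_solution_eq_T[OF x, of t s] by (simp add: T_Q_apply matrix_vector_mul_assoc[symmetric])
      then have "norm ((mat 1 - P t) *v x t) \<le> opnorm (T t s ** (mat 1 - P s)) * norm (x s)"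
        by (simp add: norm_matrix_vector_mult_le_opnorm)
      also have "\<dots> \<le> K * (mu s / mu t) powr (-\<alpha>) * B"
        using \<open>t \<le> s\<close> K_nonneg by (intro mult_mono dich_Q B) auto
      also have "(mu s / mu t) powr (-\<alpha>) = mu t powr \<alpha> * mu s powr (-\<alpha>)"
        using mu_pos[of s] mu_pos[of t] by (simp add: powr_divide powr_minus field_simps)
      finally show "norm ((mat 1 - P t) *v x t) \<le> K * mu t powr \<alpha> * mu s powr (-\<alpha>) * B"
        by (simp add: mult_ac)
    qed
  qed simp
  moreover have "x t = P t *v x t + (mat 1 - P t) *v x t"
    by (simp add: matrix_vector_mult_diff_rdistrib)
  ultimately show ?thesis
    by simp
qed

end

locale bounded_perturbation = algebraic_dichotomy A T P mu mu' K \<alpha>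
  for A :: "real \<Rightarrow> real^'n^'n" and T P mu mu' K \<alpha> +
  fixes F :: "real \<Rightarrow> real^'n \<Rightarrow> real^'n"
    and \<beta> \<gamma> :: real
  assumes F_cont: "continuous_on UNIV (\<lambda>(t, x). F t x)"
    and F_bound: "\<And>t x. norm (F t x) \<le> \<beta> * mu' t / mu t"
    and F_lipschitz: "\<And>t x y. norm (F t x - F t y) \<le> \<gamma> * mu' t / mu t * norm (x - y)"
    and gamma_nonneg: "\<gamma> \<ge> 0"
    and contraction: "2 * K * \<gamma> / \<alpha> < 1"
begin

definition bounded_solution :: "(real \<Rightarrow> real^'n) \<Rightarrow> bool" where
  "bounded_solution z \<longleftrightarrow>
     (\<forall>t. (z has_vector_derivative A t *v z t + F t (z t)) (at t)) \<and> bounded (range z)"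

lemma continuous_on_F_comp:
  assumes "continuous_on UNIV z"
  shows "continuous_on UNIV (\<lambda>s. F s (z s))"
proof -
  have "continuous_on UNIV (\<lambda>s. (s, z s))"
    by (intro continuous_intros assms)
  then show ?thesis
    using continuous_on_compose2[OF F_cont] by fastforce
qed

lemma rate_bounded_F_comp: "continuous_on UNIV z \<Longrightarrow> rate_bounded \<beta> (\<lambda>s. F s (z s))"
  unfolding rate_bounded_def using continuous_on_F_comp F_bound by blast

lemma rate_bounded_F_comp_diff:
  assumes "continuous_on UNIV z" "continuous_on UNIV w" "\<And>s. norm (z s - w s) \<le> d"
  shows "rate_bounded (\<gamma> * d) (\<lambda>s. F s (z s) - F s (w s))"
  unfolding rate_bounded_def
proof (intro conjI allI)
  show "continuous_on UNIV (\<lambda>s. F s (z s) - F s (w s))"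
    by (intro continuous_intros continuous_on_F_comp assms)
  fix s
  have "norm (F s (z s) - F s (w s)) \<le> \<gamma> * mu' s / mu s * norm (z s - w s)"
    by (rule F_lipschitz)
  also have "\<dots> \<le> \<gamma> * mu' s / mu s * d"
    using gamma_nonneg mu'_nonneg[of s] mu_pos[of s] by (intro mult_left_mono assms) auto
  finally show "norm (F s (z s) - F s (w s)) \<le> \<gamma> * d * mu' s / mu s"
    by (simp add: mult_ac)
qed

lemma norm_green_F_comp_diff_le:
  assumes "continuous_on UNIV z" "continuous_on UNIV w" "\<And>s. norm (z s - w s) \<le> d"
  shows "norm (green (\<lambda>s. F s (z s)) t - green (\<lambda>s. F s (w s)) t) \<le> 2 * K * \<gamma> / \<alpha> * d"
proof -
  have "norm (green (\<lambda>s. F s (z s) - F s (w s)) t) \<le> 2 * K * (\<gamma> * d) / \<alpha>"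
    by (rule norm_green_le[OF rate_bounded_F_comp_diff[OF assms]])
  then show ?thesis
    by (simp add: green_diff[OF rate_bounded_F_comp rate_bounded_F_comp] assms)
qed

lemma bounded_solution_iff_green_fixpoint:
  "bounded_solution z \<longleftrightarrow>
     continuous_on UNIV z \<and> bounded (range z) \<and> green (\<lambda>s. F s (z s)) = z"
proof
  assume sol: "bounded_solution z"
  then have deriv: "\<And>t. (z has_vector_derivative A t *v z t + F t (z t)) (at t)"
    and "bounded (range z)"
    by (auto simp: bounded_solution_def)
  have cont: "continuous_on UNIV z"
    using deriv by (intro continuous_at_imp_continuous_on ballI has_vector_derivative_continuous)
  let ?G = "green (\<lambda>s. F s (z s))"
  have hom: "hom_solution (\<lambda>t. z t - ?G t)"
    unfolding hom_solution_def
  proof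
    fix t
    show "((\<lambda>t. z t - ?G t) has_vector_derivative A t *v (z t - ?G t)) (at t)"
      using has_vector_derivative_diff[OF deriv green_has_derivative[OF rate_bounded_F_comp[OF cont]]]
      by (simp add: matrix_vector_mult_diff_distrib)
  qed
  have "bounded (range (\<lambda>t. z t - ?G t))"
    using norm_green_le[OF rate_bounded_F_comp[OF cont]] \<open>bounded (range z)\<close>
    by (intro bounded_minus_comp) (auto simp: bounded_iff)
  then have "z t - ?G t = 0" for t
    by (rule bounded_hom_solution_eq_0[OF hom])
  then have "?G = z"
    by (metis eq_iff_diff_eq_0 ext)
  with cont \<open>bounded (range z)\<close> show "continuous_on UNIV z \<and> bounded (range z) \<and> ?G = z"
    by blast
next
  assume fixpoint: "continuous_on UNIV z \<and> bounded (range z) \<and> green (\<lambda>s. F s (z s)) = z"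
  have "(z has_vector_derivative A t *v z t + F t (z t)) (at t)" for t
    using green_has_derivative[OF rate_bounded_F_comp, of z t] fixpoint by simp
  with fixpoint show "bounded_solution z"
    unfolding bounded_solution_def by blast
qed

lemma green_F_comp_bcontfun:
  assumes "continuous_on UNIV z"
  shows "green (\<lambda>s. F s (z s)) \<in> bcontfun"
  using norm_green_le[OF rate_bounded_F_comp[OF assms]]
    green_has_derivative[OF rate_bounded_F_comp[OF assms]]
  by (intro bcontfun_normI continuous_at_imp_continuous_on ballI has_vector_derivative_continuous)

definition green_map :: "(real \<Rightarrow>\<^sub>C (real^'n)) \<Rightarrow> (real \<Rightarrow>\<^sub>C (real^'n))" where
  "green_map z = Bcontfun (green (\<lambda>s. F s (apply_bcontfun z s)))"

lemma apply_green_map: "apply_bcontfun (green_map z) = green (\<lambda>s. F s (apply_bcontfun z s))"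
  unfolding green_map_def by (rule Bcontfun_inverse[OF green_F_comp_bcontfun]) simp

lemma dist_green_map_le: "dist (green_map z) (green_map w) \<le> 2 * K * \<gamma> / \<alpha> * dist z w"
proof (rule dist_bound)
  fix t
  have "norm (apply_bcontfun z s - apply_bcontfun w s) \<le> dist z w" for s
    by (metis dist_bounded dist_norm)
  then show "dist (green_map z t) (green_map w t) \<le> 2 * K * \<gamma> / \<alpha> * dist z w"
    unfolding dist_norm apply_green_map by (intro norm_green_F_comp_diff_le) auto
qed

theorem bounded_solution_exists_unique:
  "\<exists>z. bounded_solution z \<and> (\<forall>t. norm (z t) \<le> 2 * K * \<beta> / \<alpha>) \<and> (\<forall>w. bounded_solution w \<longrightarrow> w = z)"
proof -
  have "0 \<le> 2 * K * \<gamma> / \<alpha>"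
    using K_nonneg gamma_nonneg alpha_pos by simp
  then have "\<exists>!g. green_map g = g"
    using contraction dist_green_map_le by (intro banach_fix_type) auto
  then obtain g where fixed: "green_map g = g" and unique: "\<And>h. green_map h = h \<Longrightarrow> h = g"
    by metis
  define z where "z = apply_bcontfun g"
  have z_fixed: "green (\<lambda>s. F s (z s)) = z"
    using arg_cong[OF fixed, of apply_bcontfun] unfolding z_def apply_green_map .
  then have "bounded_solution z"
    unfolding bounded_solution_iff_green_fixpoint z_def by simp
  moreover have "norm (z t) \<le> 2 * K * \<beta> / \<alpha>" for t
    using norm_green_le[OF rate_bounded_F_comp, of z t] z_fixed unfolding z_def by simp
  moreover have "w = z" if "bounded_solution w" for w
  proof -
    have w: "continuous_on UNIV w" "bounded (range w)" "green (\<lambda>s. F s (w s)) = w"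
      using that unfolding bounded_solution_iff_green_fixpoint by auto
    then have "w \<in> bcontfun"
      by (simp add: bcontfun_def)
    then have "green_map (Bcontfun w) = Bcontfun w"
      unfolding green_map_def by (simp add: Bcontfun_inverse w(3))
    then show "w = z"
      unfolding z_def using unique Bcontfun_inverse[OF \<open>w \<in> bcontfun\<close>] by metis
  qed
  ultimately show ?thesis
    by blast
qed

end

theorem lemma3p3:
  fixes A :: "real \<Rightarrow> real^'n^'n"
    and T :: "real \<Rightarrow> real \<Rightarrow> real^'n^'n"
    and P :: "real \<Rightarrow> real^'n^'n"
    and mu mu' :: "real \<Rightarrow> real"
    and f :: "real \<Rightarrow> real^'n \<Rightarrow> real^'n"
    and K \<alpha> \<beta> \<gamma> :: real
  assumes A_cont: "continuous_on UNIV A"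
    and A_bdd: "bounded (range A)"
    and T_id: "\<And>s. T s s = mat 1"
    and T_deriv: "\<And>t s. ((\<lambda>t. T t s) has_vector_derivative (A t ** T t s)) (at t)"
    and mu_pos: "\<And>t. mu t > 0"
    and mu_mono: "mono mu"
    and mu_deriv: "\<And>t. (mu has_real_derivative mu' t) (at t)"
    and mu_0: "mu 0 = 1"
    and mu_bot: "(mu \<longlongrightarrow> 0) at_bot"
    and mu_top: "filterlim mu at_top at_top"
    and P_proj: "\<And>s. P s ** P s = P s"
    and K_pos: "K > 0" and alpha_pos: "\<alpha> > 0"
    and P_comm: "\<And>t s. T t s ** P s = P t ** T t s"
    and dich_P: "\<And>t s. t \<ge> s \<Longrightarrow> opnorm (T t s ** P s) \<le> K * (mu t / mu s) powr (-\<alpha>)"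
    and dich_Q: "\<And>t s. t \<le> s \<Longrightarrow> opnorm (T t s ** (mat 1 - P s)) \<le> K * (mu s / mu t) powr (-\<alpha>)"
    and f_cont: "continuous_on UNIV (\<lambda>(t, x). f t x)"
    and beta_nn: "\<beta> \<ge> 0" and gamma_nn: "\<gamma> \<ge> 0"
    and f_bdd: "\<And>t x. norm (f t x) \<le> \<beta> * mu' t / mu t"
    and f_lip: "\<And>t x1 x2. norm (f t x1 - f t x2) \<le> \<gamma> * mu' t / mu t * norm (x1 - x2)"
    and small: "6 * K * \<gamma> / \<alpha> < 1"
  shows "\<forall>\<tau> (\<xi>::real^'n). \<exists>g.
           (\<forall>t. (g has_vector_derivative (A t *v g t + f t (T t \<tau> *v \<xi> + g t))) (at t))
         \<and> bounded (range g)
         \<and> (\<forall>t. norm (g t) \<le> 2 * K * \<beta> / \<alpha>)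
         \<and> (\<forall>h. (\<forall>t. (h has_vector_derivative (A t *v h t + f t (T t \<tau> *v \<xi> + h t))) (at t))
                \<and> bounded (range h) \<longrightarrow> h = g)"
proof (intro allI)
  fix \<tau> :: real and \<xi> :: "real^'n"
  have evolution: "evolution_operator A T"
    by unfold_locales (fact A_bdd T_id T_deriv)+
  interpret bounded_perturbation A T P mu mu' K \<alpha> "\<lambda>t x. f t (T t \<tau> *v \<xi> + x)" \<beta> \<gamma>
  proof unfold_locales
    show "continuous_on UNIV (\<lambda>(t, x). f t (T t \<tau> *v \<xi> + x))"
      by (rule continuous_on_shift_second[OF f_cont evolution_operator.continuous_on_T_first[OF evolution]])
    show "norm (f t (T t \<tau> *v \<xi> + x) - f t (T t \<tau> *v \<xi> + y)) \<le> \<gamma> * mu' t / mu t * norm (x - y)"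
      for t x y
      using f_lip[of t "T t \<tau> *v \<xi> + x" "T t \<tau> *v \<xi> + y"] by simp
    have "2 * K * \<gamma> / \<alpha> \<le> 6 * K * \<gamma> / \<alpha>"
      using K_pos gamma_nn alpha_pos by (intro divide_right_mono mult_right_mono) auto
    with small show "2 * K * \<gamma> / \<alpha> < 1"
      by linarith
  qed (fact A_bdd T_id T_deriv mu_pos mu_mono mu_deriv mu_bot mu_top alpha_pos P_comm dich_P dich_Q
      f_bdd gamma_nn)+
  from bounded_solution_exists_unique
  show "\<exists>g. (\<forall>t. (g has_vector_derivative (A t *v g t + f t (T t \<tau> *v \<xi> + g t))) (at t))
         \<and> bounded (range g)
         \<and> (\<forall>t. norm (g t) \<le> 2 * K * \<beta> / \<alpha>)
         \<and> (\<forall>h. (\<forall>t. (h has_vector_derivative (A t *v h t + f t (T t \<tau> *v \<xi> + h t))) (at t))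
                \<and> bounded (range h) \<longrightarrow> h = g)"
    unfolding bounded_solution_def by blast
qed

end
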